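(* Let $G_{\max}=(V,E_{\max})$ be a finite, simple, connected, undirected graph, and let $\lambda',\mu',\gamma'>0$ with $\frac{\lambda'}{\mu'}>1$ and $0<\gamma'\le 1$ (Regime III). For a network state $\mathbf{A}$ (a subset $E(\mathbf{A})\subseteq E_{\max}$ of closed edges) let $g(E(\mathbf{A}))$ be the number of $C_3$ subgraphs (triangles) formed by $E(\mathbf{A})$, and call a maximizer of $\pi(\mathbf{A})\propto(\lambda'/\mu')^{|E(\mathbf{A})|}\gamma'^{\,g(E(\mathbf{A}))}$ over all network states a most-probable network (for TRI-DBP). If $\lambda'\gamma'<\mu'$, then the most-probable networks are exactly the network states $\mathbf{A}^*$ with $g(E(\mathbf{A}^* ))=0$ and $|E(\mathbf{A}^* )|$ maximum among such states; equivalently, $(V,E(\mathbf{A}^* ))$ is a largest possible (maximum number of edges) triangle-free subgraph of $G_{\max}$. *)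

theory Defs
  imports Main "HOL-Analysis.Analysis"
begin

definition simple_graph :: "'a set \<Rightarrow> 'a set set \<Rightarrow> bool" where
  "simple_graph V E \<longleftrightarrow> finite V \<and>
     (\<forall>e\<in>E. \<exists>u v. u \<in> V \<and> v \<in> V \<and> u \<noteq> v \<and> e = {u, v})"

definition graph_connected :: "'a set \<Rightarrow> 'a set set \<Rightarrow> bool" where
  "graph_connected V E \<longleftrightarrow> V \<noteq> {} \<and>
     (\<forall>u\<in>V. \<forall>v\<in>V. (u, v) \<in> {(x, y). {x, y} \<in> E}\<^sup>*)"

definition network_states :: "'a set set \<Rightarrow> 'a set set set" where
  "network_states Emax = Pow Emax"

definition num_triangles :: "'a set \<Rightarrow> 'a set set \<Rightarrow> nat" where
  "num_triangles V E = card {T. T \<subseteq> V \<and> card T = 3 \<and>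
      (\<forall>x\<in>T. \<forall>y\<in>T. x \<noteq> y \<longrightarrow> {x, y} \<in> E)}"

definition tri_weight :: "real \<Rightarrow> real \<Rightarrow> real \<Rightarrow> 'a set \<Rightarrow> 'a set set \<Rightarrow> real" where
  "tri_weight lam mu gam V E = (lam / mu) ^ card E * gam ^ num_triangles V E"

definition tri_pi :: "real \<Rightarrow> real \<Rightarrow> real \<Rightarrow> 'a set \<Rightarrow> 'a set set \<Rightarrow> 'a set set \<Rightarrow> real" where
  "tri_pi lam mu gam V Emax E =
     tri_weight lam mu gam V E / (\<Sum>F\<in>network_states Emax. tri_weight lam mu gam V F)"

definition most_probable :: "real \<Rightarrow> real \<Rightarrow> real \<Rightarrow> 'a set \<Rightarrow> 'a set set \<Rightarrow> 'a set set set" where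
  "most_probable lam mu gam V Emax =
     {E \<in> network_states Emax. \<forall>F\<in>network_states Emax.
        tri_pi lam mu gam V Emax F \<le> tri_pi lam mu gam V Emax E}"

end

theory Submission
  imports Defs
begin

text \<open>
  Write \<open>r = \<lambda>'/\<mu>' > 1\<close>. If a state contains a triangle, deleting one of its edges destroys at
  least one triangle, so the weight \<open>r^|E| \<gamma>'^g(E)\<close> gets multiplied by at least \<open>1/(r \<gamma>') > 1\<close>.
  Repeating this, every state is dominated by a triangle-free subset of it, and on triangle-free
  states the weight \<open>r^|E|\<close> increases strictly with the number of edges.
\<close>

definition triangles :: "'a set \<Rightarrow> 'a set set \<Rightarrow> 'a set set" where
  "triangles V E = {T. T \<subseteq> V \<and> card T = 3 \<and> (\<forall>x\<in>T. \<forall>y\<in>T. x \<noteq> y \<longrightarrow> {x, y} \<in> E)}"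

lemma num_triangles_eq_card_triangles: "num_triangles V E = card (triangles V E)"
  unfolding num_triangles_def triangles_def ..

lemma finite_triangles: "finite V \<Longrightarrow> finite (triangles V E)"
  unfolding triangles_def by (rule finite_subset[of _ "Pow V"]) auto

lemma remove_triangle_edge:
  assumes "finite V" and "num_triangles V E > 0"
  obtains e where "e \<in> E" and "num_triangles V (E - {e}) < num_triangles V E"
proof -
  obtain T where T: "T \<in> triangles V E"
    using assms(2) card_gt_0_iff by (force simp: num_triangles_eq_card_triangles)
  then obtain x y z where xyz: "T = {x, y, z}" "x \<noteq> y" "x \<noteq> z" "y \<noteq> z"
    by (auto simp: triangles_def card_3_iff)
  have "{x, y} \<in> E"
    using T xyz by (auto simp: triangles_def)
  moreover have "triangles V (E - {{x, y}}) \<subseteq> triangles V E - {T}"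
    using xyz by (auto simp: triangles_def)
  then have "num_triangles V (E - {{x, y}}) < num_triangles V E"
    unfolding num_triangles_eq_card_triangles
    by (intro psubset_card_mono finite_triangles assms(1)) (use T in blast)
  ultimately show thesis by (rule that)
qed

lemma tri_weight_remove_edge_gt:
  fixes lam mu gam :: real
  assumes "lam / mu > 0" and "gam > 0" and "gam \<le> 1" and "lam / mu * gam < 1"
    and "finite E" and "e \<in> E" and "num_triangles V (E - {e}) < num_triangles V E"
  shows "tri_weight lam mu gam V E < tri_weight lam mu gam V (E - {e})"
proof -
  define r where "r = lam / mu"
  define a where "a = card (E - {e})"
  define g where "g = num_triangles V (E - {e})"
  define k where "k = num_triangles V E - g"
  have card_E: "card E = Suc a"
    unfolding a_def using assms(5,6) by (metis card_Suc_Diff1)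
  have "k \<ge> 1" and num_E: "num_triangles V E = g + k"
    using assms(7) unfolding k_def g_def by auto
  have "gam ^ k \<le> gam"
    using \<open>k \<ge> 1\<close> assms(2,3) power_decreasing[of 1 k gam] by simp
  then have "r * gam ^ k \<le> r * gam"
    using assms(1) unfolding r_def by (rule mult_left_mono[OF _ less_imp_le])
  then have factor: "r * gam ^ k < 1"
    using assms(4) unfolding r_def by linarith
  have "tri_weight lam mu gam V E = (r ^ a * gam ^ g) * (r * gam ^ k)"
    unfolding tri_weight_def r_def[symmetric] card_E num_E by (simp add: power_add)
  also have "\<dots> < r ^ a * gam ^ g"
    using mult_strict_left_mono[OF factor] assms(1,2) r_def by simp
  also have "\<dots> = tri_weight lam mu gam V (E - {e})"
    unfolding tri_weight_def r_def a_def g_def by simp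
  finally show ?thesis .
qed

lemma tri_weight_le_triangle_free_subset:
  fixes lam mu gam :: real
  assumes "lam / mu > 0" and "gam > 0" and "gam \<le> 1" and "lam / mu * gam < 1"
    and "finite V" and "finite F"
  shows "\<exists>F'\<subseteq>F. num_triangles V F' = 0 \<and>
    tri_weight lam mu gam V F \<le> tri_weight lam mu gam V F'"
  using assms(6)
proof (induction "num_triangles V F" arbitrary: F rule: less_induct)
  case (less F)
  show ?case
  proof (cases "num_triangles V F = 0")
    case True
    then show ?thesis by blast
  next
    case False
    then obtain e where e: "e \<in> F" "num_triangles V (F - {e}) < num_triangles V F"
      using remove_triangle_edge[OF assms(5)] by blast
    have smaller: "tri_weight lam mu gam V F < tri_weight lam mu gam V (F - {e})"
      using tri_weight_remove_edge_gt[OF assms(1-4) less.prems e] .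
    obtain F' where F': "F' \<subseteq> F - {e}" "num_triangles V F' = 0"
      "tri_weight lam mu gam V (F - {e}) \<le> tri_weight lam mu gam V F'"
      using less.hyps[OF e(2) finite_Diff[OF less.prems]] by blast
    then show ?thesis
      using smaller by (meson Diff_subset order.trans less_imp_le)
  qed
qed

lemma tri_weight_maximiser_iff:
  fixes lam mu gam :: real
  assumes "lam / mu > 1" and "gam > 0" and "gam \<le> 1" and "lam / mu * gam < 1"
    and "finite V" and "finite Emax" and "E \<subseteq> Emax"
  shows "(\<forall>F\<in>Pow Emax. tri_weight lam mu gam V F \<le> tri_weight lam mu gam V E) \<longleftrightarrow>
     num_triangles V E = 0 \<and> (\<forall>F\<in>Pow Emax. num_triangles V F = 0 \<longrightarrow> card F \<le> card E)"
    (is "(\<forall>F\<in>Pow Emax. ?w F \<le> ?w E) \<longleftrightarrow> _")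
proof -
  have pos: "lam / mu > 0" using assms(1) by linarith
  have weight_triangle_free: "?w F = (lam / mu) ^ card F" if "num_triangles V F = 0" for F
    using that by (simp add: tri_weight_def)
  have finite: "finite F" if "F \<in> Pow Emax" for F
    using that assms(6) by (auto intro: finite_subset)
  show ?thesis
  proof
    assume max: "\<forall>F\<in>Pow Emax. ?w F \<le> ?w E"
    have triangle_free: "num_triangles V E = 0"
    proof (rule ccontr)
      assume "num_triangles V E \<noteq> 0"
      then obtain e where "e \<in> E" "num_triangles V (E - {e}) < num_triangles V E"
        using remove_triangle_edge[OF assms(5)] by blast
      then have "?w E < ?w (E - {e})"
        using tri_weight_remove_edge_gt[OF pos assms(2-4)] finite assms(7) by blast
      moreover have "?w (E - {e}) \<le> ?w E" using max assms(7) by blast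
      ultimately show False by linarith
    qed
    moreover have "card F \<le> card E" if "F \<in> Pow Emax" "num_triangles V F = 0" for F
    proof -
      have "?w F \<le> ?w E" using max that(1) by blast
      then show ?thesis
        using that(2) triangle_free assms(1) by (simp add: weight_triangle_free)
    qed
    ultimately show "num_triangles V E = 0 \<and>
        (\<forall>F\<in>Pow Emax. num_triangles V F = 0 \<longrightarrow> card F \<le> card E)" by blast
  next
    assume E: "num_triangles V E = 0 \<and>
        (\<forall>F\<in>Pow Emax. num_triangles V F = 0 \<longrightarrow> card F \<le> card E)"
    show "\<forall>F\<in>Pow Emax. ?w F \<le> ?w E"
    proof
      fix F assume F: "F \<in> Pow Emax"
      obtain F' where F': "F' \<subseteq> F" "num_triangles V F' = 0" "?w F \<le> ?w F'"
        using tri_weight_le_triangle_free_subset[OF pos assms(2-5) finite[OF F]] by blast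
      have "card F' \<le> card E" using E F F'(1,2) by blast
      then have "?w F' \<le> ?w E"
        using E F'(2) assms(1) by (simp add: weight_triangle_free)
      with F'(3) show "?w F \<le> ?w E" by linarith
    qed
  qed
qed

lemma most_probable_eq_tri_weight_maximisers:
  fixes lam mu gam :: real
  assumes "lam / mu > 0" and "gam > 0" and "finite Emax"
  shows "most_probable lam mu gam V Emax =
     {E \<in> Pow Emax. \<forall>F\<in>Pow Emax. tri_weight lam mu gam V F \<le> tri_weight lam mu gam V E}"
proof -
  have "(\<Sum>F\<in>Pow Emax. tri_weight lam mu gam V F) > 0"
    using assms by (intro sum_pos) (auto simp: tri_weight_def)
  then show ?thesis
    by (simp add: most_probable_def tri_pi_def network_states_def divide_le_cancel)
qed

theorem theorem7:
  fixes V :: "'a set" and Emax :: "'a set set" and lam mu gam :: real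
  assumes "simple_graph V Emax" and "graph_connected V Emax"
    and "lam > 0" and "mu > 0" and "gam > 0"
    and "lam / mu > 1" and "gam \<le> 1"
    and "lam * gam < mu"
  shows "most_probable lam mu gam V Emax =
     {E \<in> network_states Emax. num_triangles V E = 0 \<and>
        (\<forall>F\<in>network_states Emax. num_triangles V F = 0 \<longrightarrow> card F \<le> card E)}"
proof -
  have "finite V" and "Emax \<subseteq> Pow V"
    using assms(1) by (auto simp: simple_graph_def)
  then have "finite Emax" by (meson finite_Pow_iff finite_subset)
  have "lam / mu * gam < 1"
    using assms(4,8) by (simp add: field_simps)
  have "lam / mu > 0" using assms(6) by linarith
  note maximiser_iff = tri_weight_maximiser_iff[OF assms(6,5,7) \<open>lam / mu * gam < 1\<close>
      \<open>finite V\<close> \<open>finite Emax\<close>]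
  show ?thesis
    unfolding most_probable_eq_tri_weight_maximisers[OF \<open>lam / mu > 0\<close> assms(5) \<open>finite Emax\<close>]
      network_states_def
    using maximiser_iff by (intro Collect_cong) blast
qed

end
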